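(* $\mathbf{Fin}<_{\mathrm{Learn}} Id <_{\mathrm{Learn}} \mathbf{co}$, and $\mathbf{Fin}\equiv^{\mathrm{fin}}_{\mathrm{Learn}} Id\equiv^{\mathrm{fin}}_{\mathrm{Learn}}\mathbf{co}$. That is: every $\mathbf{Fin}$-learnable family is $Id$-learnable, every $Id$-learnable family is $\mathbf{co}$-learnable, there is an $Id$-learnable family that is not $\mathbf{Fin}$-learnable, there is a $\mathbf{co}$-learnable family that is not $Id$-learnable, and for finite families the three notions coincide.
   Context: All structures are countable, have domain $\mathbb{N}$, are in a finite relational signature, and are identified with their atomic diagrams (elements of $2^{\mathbb{N}}$). A family of structures $\mathfrak{K}$ is a countable set of pairwise nonisomorphic such structures. $\mathcal{S}\restriction_s$ is the finite substructure of $\mathcal{S}$ on $\{0,\dots,s\}$. $\mathrm{LD}(\mathfrak{K})\subseteq 2^{\mathbb{N}}$ is the set of structures with domain $\mathbb{N}$ isomorphic to a member of $\mathfrak{K}$ (subspace topology). The hypothesis space is $\{\ulcorner\mathcal{A}\urcorner:\mathcal{A}\in\mathfrak{K}\}\cup\{?\}$; a learner is an arbitrary function from $\{\mathcal{S}\restriction_s:\mathcal{S}\in\mathrm{LD}(\mathfrak{K})\}$ to the hypothesis space. $\mathbf{Fin}$-learnable: some learner $\mathbf{M}$ such that for each $\mathcal{S}\in\mathrm{LD}(\mathfrak{K})$ there is $s_0$ with $\mathbf{M}(\mathcal{S}\restriction_t)=?$ for $t<s_0$ and $\mathbf{M}(\mathcal{S}\restriction_t)=\ulcorner\mathcal{A}\urcorner$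 for $t\ge s_0$, where $\mathcal{A}\cong\mathcal{S}$. $\mathbf{co}$-learnable: some learner $\mathbf{M}$ such that for each $\mathcal{S}\in\mathrm{LD}(\mathfrak{K})$, $\{\mathbf{M}(\mathcal{S}\restriction_s):s\}\setminus\{?\}=\{\ulcorner\mathcal{B}\urcorner:\mathcal{B}\in\mathfrak{K},\mathcal{B}\neq\mathcal{A}\}$ where $\mathcal{A}\cong\mathcal{S}$. For an equivalence relation $E$ on a space $X$, $\mathfrak{K}$ is $E$-learnable if there is a continuous $\Gamma:\mathrm{LD}(\mathfrak{K})\to X$ with $\mathcal{S}\cong\mathcal{S}'\iff\Gamma(\mathcal{S})\,E\,\Gamma(\mathcal{S}')$ for all $\mathcal{S},\mathcal{S}'\in\mathrm{LD}(\mathfrak{K})$. $Id$ is equality on Baire space $\mathbb{N}^{\mathbb{N}}$. For learning criteria $X,Y$ (learning paradigms or equivalence relations): $X\leq_{\mathrm{Learn}}Y$ means every $X$-learnable family is $Y$-learnable; $X\leq^{\mathrm{fin}}_{\mathrm{Learn}}Y$ means every finite $X$-learnable family is $Y$-learnable; $<$ means $\leq$ and not $\geq$; $\equiv$ means both directions. *)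

theory Defs
  imports "HOL-Analysis.Analysis"
begin

text \<open>A finite relational signature is a list of arities: relation symbol i (i < length sig)
  has arity sig ! i.  A structure with domain nat is given by its relations, as a
  predicate on (symbol, tuple); this is the atomic diagram.\<close>

type_synonym struc = "nat \<Rightarrow> nat list \<Rightarrow> bool"
type_synonym sig = "nat list"

definition is_struc :: "sig \<Rightarrow> struc \<Rightarrow> bool" where
  "is_struc \<sigma> R \<longleftrightarrow> (\<forall>i xs. R i xs \<longrightarrow> i < length \<sigma> \<and> length xs = \<sigma> ! i)"

definition iso :: "struc \<Rightarrow> struc \<Rightarrow> bool" where
  "iso R R' \<longleftrightarrow> (\<exists>f :: nat \<Rightarrow> nat. bij f \<and> (\<forall>i xs. R i xs \<longleftrightarrow> R' i (map f xs)))"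

text \<open>Finite substructure on {0..s}; a learner receives s together with it.\<close>
definition restr :: "struc \<Rightarrow> nat \<Rightarrow> struc" where
  "restr R s = (\<lambda>i xs. R i xs \<and> (\<forall>x\<in>set xs. x \<le> s))"

definition family :: "sig \<Rightarrow> struc set \<Rightarrow> bool" where
  "family \<sigma> K \<longleftrightarrow> countable K \<and> (\<forall>A\<in>K. is_struc \<sigma> A)
     \<and> (\<forall>A\<in>K. \<forall>B\<in>K. iso A B \<longrightarrow> A = B)"

definition LD :: "sig \<Rightarrow> struc set \<Rightarrow> struc set" where
  "LD \<sigma> K = {S. is_struc \<sigma> S \<and> (\<exists>A\<in>K. iso S A)}"

text \<open>Learners: functions from finite substructures (s, S|s) to hypotheses;
  None is the hypothesis ?, Some A is the name of A.\<close>
type_synonym learner = "nat \<Rightarrow> struc \<Rightarrow> struc option"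

definition Fin_learnable :: "sig \<Rightarrow> struc set \<Rightarrow> bool" where
  "Fin_learnable \<sigma> K \<longleftrightarrow> (\<exists>M :: learner. \<forall>S\<in>LD \<sigma> K. \<exists>s0.
      (\<forall>t<s0. M t (restr S t) = None) \<and>
      (\<exists>A\<in>K. iso S A \<and> (\<forall>t\<ge>s0. M t (restr S t) = Some A)))"

definition co_learnable :: "sig \<Rightarrow> struc set \<Rightarrow> bool" where
  "co_learnable \<sigma> K \<longleftrightarrow> (\<exists>M :: learner. \<forall>S\<in>LD \<sigma> K. \<forall>A\<in>K. iso S A \<longrightarrow>
      {B. \<exists>s. M s (restr S s) = Some B} = K - {A})"

definition struc_top :: "struc topology" where
  "struc_top = product_topology (\<lambda>i. product_topology (\<lambda>xs. discrete_topology (UNIV :: bool set)) UNIV) UNIV"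

definition baire_top :: "(nat \<Rightarrow> nat) topology" where
  "baire_top = product_topology (\<lambda>n. discrete_topology (UNIV :: nat set)) UNIV"

definition Id_learnable :: "sig \<Rightarrow> struc set \<Rightarrow> bool" where
  "Id_learnable \<sigma> K \<longleftrightarrow> (\<exists>\<Gamma> :: struc \<Rightarrow> (nat \<Rightarrow> nat).
      continuous_map (subtopology struc_top (LD \<sigma> K)) baire_top \<Gamma> \<and>
      (\<forall>S\<in>LD \<sigma> K. \<forall>S'\<in>LD \<sigma> K. iso S S' \<longleftrightarrow> \<Gamma> S = \<Gamma> S'))"

end

theory Submission
  imports Defs "HOL-Library.Nat_Bijection" "HOL-Combinatorics.Transposition"
begin

text \<open>A Fin-learner's final conjecture is locally constant on LD, so the index of the conjectured
  structure is a continuous complete invariant. Conversely, a continuous complete invariant into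
  Baire space makes every isomorphism class closed in LD; a co-learner then dovetails over members
  of K and stages, naming a member as soon as no structure consistent with the data is isomorphic
  to it. For finite K a co-learner eventually has named all members but one, which a Fin-learner
  then outputs.

  The separations use finite successor chains with marked endpoints. Together with their limit,
  a ray, they form a family whose classes are clopen except for the ray's, which is closed but not
  open: Id- but not Fin-learnable. Adding a second ray, the limit of isomorphic copies of the
  chains, keeps all classes closed but leaves two non-isomorphic limits of isomorphic sequences,
  which no continuous invariant separates: co- but not Id-learnable.\<close>

lemma iso_refl: "iso S S"
  unfolding iso_def by (rule exI[of _ id]) simp

lemma iso_sym: "iso S S' \<Longrightarrow> iso S' S"
  unfolding iso_def
proof (elim exE conjE)
  fix f assume f: "bij f" "\<forall>i xs. S i xs \<longleftrightarrow> S' i (map f xs)"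
  have "S' i xs \<longleftrightarrow> S i (map (inv f) xs)" for i xs
    using f by (simp add: bij_is_surj surj_f_inv_f map_idI)
  then show "\<exists>g. bij g \<and> (\<forall>i xs. S' i xs \<longleftrightarrow> S i (map g xs))"
    using bij_imp_bij_inv[OF f(1)] by blast
qed

lemma iso_trans: "iso S S' \<Longrightarrow> iso S' S'' \<Longrightarrow> iso S S''"
  unfolding iso_def
proof (elim exE conjE)
  fix f g assume "bij f" "\<forall>i xs. S i xs \<longleftrightarrow> S' i (map f xs)"
    and "bij g" "\<forall>i xs. S' i xs \<longleftrightarrow> S'' i (map g xs)"
  then show "\<exists>h. bij h \<and> (\<forall>i xs. S i xs \<longleftrightarrow> S'' i (map h xs))"
    by (intro exI[of _ "g \<circ> f"]) (simp add: bij_comp)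
qed

lemma restr_restr: "t \<le> s \<Longrightarrow> restr (restr S s) t = restr S t"
  unfolding restr_def by (intro ext) (meson order_trans)

lemma restr_eq_mono: "restr S s = restr S' s \<Longrightarrow> t \<le> s \<Longrightarrow> restr S t = restr S' t"
  by (metis restr_restr)

lemma restr_eqD: "restr S s = restr S' s \<Longrightarrow> \<forall>x\<in>set xs. x \<le> s \<Longrightarrow> S i xs = S' i xs"
  unfolding restr_def by metis

lemma mem_LD_iff: "S \<in> LD \<sigma> K \<longleftrightarrow> is_struc \<sigma> S \<and> (\<exists>A\<in>K. iso S A)"
  unfolding LD_def by simp

lemma family_mem_LD: "family \<sigma> K \<Longrightarrow> A \<in> K \<Longrightarrow> A \<in> LD \<sigma> K"
  unfolding family_def mem_LD_iff using iso_refl by auto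

lemma family_iso_unique:
  assumes "family \<sigma> K" "A \<in> K" "B \<in> K" "iso S A" "iso S B"
  shows "A = B"
proof -
  have "iso A B" using iso_trans[OF iso_sym[OF assms(4)] assms(5)] .
  then show ?thesis using assms(1-3) unfolding family_def by blast
qed


section \<open>The topology on structures\<close>

lemma topspace_struc_top [simp]: "topspace struc_top = UNIV"
  unfolding struc_top_def by simp

lemma topspace_baire_top [simp]: "topspace baire_top = UNIV"
  unfolding baire_top_def by simp

lemma Hausdorff_baire_top: "Hausdorff_space baire_top"
  unfolding baire_top_def by (simp add: Hausdorff_space_product_topology)

lemma continuous_map_atom: "continuous_map struc_top (discrete_topology UNIV) (\<lambda>S. S i xs)"
proof -
  have "continuous_map struc_top
      (product_topology (\<lambda>_. discrete_topology (UNIV :: bool set)) UNIV) (\<lambda>S. S i)"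
    unfolding struc_top_def by (rule continuous_map_product_projection) simp
  moreover have "continuous_map (product_topology (\<lambda>_. discrete_topology (UNIV :: bool set)) UNIV)
      (discrete_topology UNIV) (\<lambda>T. T xs)"
    by (rule continuous_map_product_projection) simp
  ultimately show ?thesis using continuous_map_compose[unfolded o_def] by blast
qed

lemma openin_struc_top_atom: "openin struc_top {S. S i xs = b}"
  using openin_continuous_map_preimage[OF continuous_map_atom, of "{b}" i xs] by simp

text \<open>Within structures of a fixed finite signature, agreeing with S up to s is a condition on
  finitely many atoms, hence open.\<close>

lemma restr_neighbourhood:
  assumes "is_struc \<sigma> S"
  shows "\<exists>T. openin struc_top T \<and> S \<in> T \<and> (\<forall>S'\<in>T. is_struc \<sigma> S' \<longrightarrow> restr S' s = restr S s)"
proof -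
  define F where "F = Sigma {..<length \<sigma>} (\<lambda>i. {xs. set xs \<subseteq> {..s} \<and> length xs = \<sigma> ! i})"
  have "finite F"
    unfolding F_def by (rule finite_SigmaI) (auto intro: finite_lists_length_eq)
  define T where "T = (\<Inter>(i, xs)\<in>F. {S'. S' i xs = S i xs}) \<inter> topspace struc_top"
  have "openin struc_top T"
    unfolding T_def using \<open>finite F\<close> openin_struc_top_atom by (intro openin_INT) auto
  moreover have "restr S' s = restr S s" if "S' \<in> T" "is_struc \<sigma> S'" for S'
    unfolding restr_def
  proof (intro ext)
    fix i xs
    show "(S' i xs \<and> (\<forall>x\<in>set xs. x \<le> s)) = (S i xs \<and> (\<forall>x\<in>set xs. x \<le> s))"
    proof (cases "(i, xs) \<in> F")
      case True
      then show ?thesis using \<open>S' \<in> T\<close> unfolding T_def by fastforce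
    next
      case False
      then show ?thesis
        using \<open>is_struc \<sigma> S'\<close> assms unfolding F_def is_struc_def by auto
    qed
  qed
  ultimately show ?thesis unfolding T_def by auto
qed

text \<open>P holds on a basic neighbourhood of S in the space LD.\<close>

definition nearby :: "sig \<Rightarrow> struc set \<Rightarrow> struc \<Rightarrow> (struc \<Rightarrow> bool) \<Rightarrow> bool" where
  "nearby \<sigma> K S P \<longleftrightarrow> (\<exists>s. \<forall>S'\<in>LD \<sigma> K. restr S' s = restr S s \<longrightarrow> P S')"

definition locally_constant_LD :: "sig \<Rightarrow> struc set \<Rightarrow> (struc \<Rightarrow> 'a) \<Rightarrow> bool" where
  "locally_constant_LD \<sigma> K g \<longleftrightarrow> (\<forall>S\<in>LD \<sigma> K. nearby \<sigma> K S (\<lambda>S'. g S' = g S))"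

lemma nearby_openin:
  assumes "S \<in> LD \<sigma> K" "nearby \<sigma> K S P"
  shows "\<exists>T. openin (subtopology struc_top (LD \<sigma> K)) T \<and> S \<in> T \<and> (\<forall>S'\<in>T. P S')"
proof -
  obtain s where s: "\<forall>S'\<in>LD \<sigma> K. restr S' s = restr S s \<longrightarrow> P S'"
    using assms(2) unfolding nearby_def by blast
  have "is_struc \<sigma> S" using assms(1) unfolding mem_LD_iff by blast
  then obtain T where T: "openin struc_top T" "S \<in> T" "\<forall>S'\<in>T. is_struc \<sigma> S' \<longrightarrow> restr S' s = restr S s"
    using restr_neighbourhood by blast
  have "openin (subtopology struc_top (LD \<sigma> K)) (LD \<sigma> K \<inter> T)"
    using T(1) by (rule openin_subtopology_Int2)
  moreover have "P S'" if "S' \<in> LD \<sigma> K \<inter> T" for S'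
  proof -
    have "is_struc \<sigma> S'" using that by (simp add: mem_LD_iff)
    then show ?thesis using that s T(3) by blast
  qed
  ultimately show ?thesis using assms(1) T(2) by blast
qed

lemma continuous_map_locally_constant_LD:
  assumes "locally_constant_LD \<sigma> K g" "topspace Y = UNIV"
  shows "continuous_map (subtopology struc_top (LD \<sigma> K)) Y g"
  unfolding continuous_map_def
proof (intro conjI allI impI)
  show "g \<in> topspace (subtopology struc_top (LD \<sigma> K)) \<rightarrow> topspace Y"
    using assms(2) by simp
  fix U
  let ?V = "{S \<in> topspace (subtopology struc_top (LD \<sigma> K)). g S \<in> U}"
  have "\<exists>T. openin (subtopology struc_top (LD \<sigma> K)) T \<and> S \<in> T \<and> T \<subseteq> ?V" if "S \<in> ?V" for S
  proof -
    have S: "S \<in> LD \<sigma> K" "g S \<in> U" using that by auto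
    then have "nearby \<sigma> K S (\<lambda>S'. g S' = g S)"
      using assms(1) unfolding locally_constant_LD_def by blast
    then obtain T where T: "openin (subtopology struc_top (LD \<sigma> K)) T" "S \<in> T" "\<forall>S'\<in>T. g S' = g S"
      using nearby_openin[OF S(1)] by blast
    have "T \<subseteq> LD \<sigma> K" using openin_subset[OF T(1)] by simp
    then have "T \<subseteq> ?V" using T(3) S(2) by auto
    then show ?thesis using T(1,2) by blast
  qed
  then show "openin (subtopology struc_top (LD \<sigma> K)) ?V"
    by (subst openin_subopen) blast
qed

lemma limitin_restr:
  assumes "\<forall>j. restr (T j) j = restr S j"
  shows "limitin struc_top T S sequentially"
proof -
  have "limitin (discrete_topology UNIV) (\<lambda>j. T j i xs) (S i xs) sequentially" for i xs
  proof -
    obtain m where m: "\<forall>x\<in>set xs. x \<le> m"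
      using finite_nat_set_iff_bounded_le by blast
    have "T j i xs = S i xs" if "m \<le> j" for j
      using restr_eqD[OF assms[rule_format, of j]] m that by (meson order_trans)
    then show ?thesis
      by (intro limitin_eventually) (auto simp: eventually_sequentially)
  qed
  then show ?thesis by (simp add: struc_top_def limitin_componentwise)
qed

lemma Id_learnable_iso_limit:
  assumes "Id_learnable \<sigma> K"
    and T: "\<forall>j. T j \<in> LD \<sigma> K \<and> T' j \<in> LD \<sigma> K \<and> iso (T j) (T' j)"
    and S: "S \<in> LD \<sigma> K" "S' \<in> LD \<sigma> K"
    and approx: "\<forall>j. restr (T j) j = restr S j" "\<forall>j. restr (T' j) j = restr S' j"
  shows "iso S S'"
proof -
  obtain \<Gamma> where cont: "continuous_map (subtopology struc_top (LD \<sigma> K)) baire_top \<Gamma>"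
    and \<Gamma>: "\<forall>S\<in>LD \<sigma> K. \<forall>S'\<in>LD \<sigma> K. iso S S' \<longleftrightarrow> \<Gamma> S = \<Gamma> S'"
    using assms(1) unfolding Id_learnable_def by blast
  have "\<Gamma> (T j) = \<Gamma> (T' j)" for j
    using T \<Gamma> by blast
  then have "\<Gamma> \<circ> T' = \<Gamma> \<circ> T" by (simp add: fun_eq_iff)
  moreover have "limitin (subtopology struc_top (LD \<sigma> K)) T S sequentially"
    "limitin (subtopology struc_top (LD \<sigma> K)) T' S' sequentially"
    using limitin_restr approx S T by (auto simp: limitin_subtopology)
  then have "limitin baire_top (\<Gamma> \<circ> T) (\<Gamma> S) sequentially"
    "limitin baire_top (\<Gamma> \<circ> T') (\<Gamma> S') sequentially"
    by (auto intro: continuous_map_limit[OF cont])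
  ultimately have "\<Gamma> S = \<Gamma> S'"
    using limitin_Hausdorff_unique Hausdorff_baire_top by fastforce
  then show ?thesis using \<Gamma> S by blast
qed


section \<open>Fin, Id and co in general\<close>

definition cls :: "struc set \<Rightarrow> struc \<Rightarrow> struc" where
  "cls K S = (THE A. A \<in> K \<and> iso S A)"

lemma cls_eqI: "family \<sigma> K \<Longrightarrow> A \<in> K \<Longrightarrow> iso S A \<Longrightarrow> cls K S = A"
  unfolding cls_def by (rule the_equality) (auto dest: family_iso_unique)

lemma cls_in_iso:
  assumes "family \<sigma> K" "S \<in> LD \<sigma> K"
  shows "cls K S \<in> K" "iso S (cls K S)"
  using assms cls_eqI unfolding mem_LD_iff by metis+

lemma cls_eq_iff:
  assumes "family \<sigma> K" "S \<in> LD \<sigma> K" "S' \<in> LD \<sigma> K"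
  shows "cls K S = cls K S' \<longleftrightarrow> iso S S'"
  using cls_in_iso[OF assms(1,2)] cls_in_iso[OF assms(1,3)] cls_eqI[OF assms(1)]
  by (metis iso_sym iso_trans)

lemma Fin_learnable_locally_constant_cls:
  assumes fam: "family \<sigma> K" and "Fin_learnable \<sigma> K"
  shows "locally_constant_LD \<sigma> K (cls K)"
proof -
  obtain M where M: "\<forall>S\<in>LD \<sigma> K. \<exists>s0. (\<forall>t<s0. M t (restr S t) = None) \<and>
      (\<exists>A\<in>K. iso S A \<and> (\<forall>t\<ge>s0. M t (restr S t) = Some A))"
    using assms(2) unfolding Fin_learnable_def by blast
  show ?thesis
    unfolding locally_constant_LD_def nearby_def
  proof
    fix S assume "S \<in> LD \<sigma> K"
    then obtain s0 A where A: "A \<in> K" "iso S A" "M s0 (restr S s0) = Some A"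
      using M by blast
    have "cls K S' = cls K S" if S': "S' \<in> LD \<sigma> K" "restr S' s0 = restr S s0" for S'
    proof -
      obtain s1 A' where A': "\<forall>t<s1. M t (restr S' t) = None" "A' \<in> K" "iso S' A'"
        "\<forall>t\<ge>s1. M t (restr S' t) = Some A'"
        using M S'(1) by blast
      text \<open>A Fin learner never revises a conjecture, so its first guess on S' is already A.\<close>
      have "M s0 (restr S' s0) = Some A" using A(3) S'(2) by simp
      then have "A' = A" using A'(1,4) by (metis leI option.distinct(1) option.inject)
      then show ?thesis using cls_eqI[OF fam] A A' by metis
    qed
    then show "\<exists>s. \<forall>S'\<in>LD \<sigma> K. restr S' s = restr S s \<longrightarrow> cls K S' = cls K S" by blast
  qed
qed

lemma Id_learnable_if_locally_constant_cls:
  assumes fam: "family \<sigma> K" and lc: "locally_constant_LD \<sigma> K (cls K)"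
  shows "Id_learnable \<sigma> K"
proof -
  define \<Gamma> where "\<Gamma> S = (\<lambda>_::nat. to_nat_on K (cls K S))" for S
  have "locally_constant_LD \<sigma> K \<Gamma>"
    using lc unfolding locally_constant_LD_def nearby_def \<Gamma>_def by metis
  then have "continuous_map (subtopology struc_top (LD \<sigma> K)) baire_top \<Gamma>"
    by (rule continuous_map_locally_constant_LD) simp
  moreover have "\<Gamma> S = \<Gamma> S' \<longleftrightarrow> iso S S'" if "S \<in> LD \<sigma> K" "S' \<in> LD \<sigma> K" for S S'
  proof -
    have "countable K" using fam unfolding family_def by blast
    then have "\<Gamma> S = \<Gamma> S' \<longleftrightarrow> cls K S = cls K S'"
      using cls_in_iso(1)[OF fam that(1)] cls_in_iso(1)[OF fam that(2)]
      unfolding \<Gamma>_def by (metis to_nat_on_inj)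
    then show ?thesis using cls_eq_iff[OF fam that] by simp
  qed
  ultimately show ?thesis unfolding Id_learnable_def by blast
qed

lemma Fin_learnable_imp_Id_learnable: "family \<sigma> K \<Longrightarrow> Fin_learnable \<sigma> K \<Longrightarrow> Id_learnable \<sigma> K"
  by (intro Id_learnable_if_locally_constant_cls Fin_learnable_locally_constant_cls)

text \<open>Every isomorphism class of K is closed in LD.\<close>

definition closed_classes :: "sig \<Rightarrow> struc set \<Rightarrow> bool" where
  "closed_classes \<sigma> K \<longleftrightarrow>
     (\<forall>S\<in>LD \<sigma> K. \<forall>B\<in>K. \<not> iso S B \<longrightarrow> nearby \<sigma> K S (\<lambda>S'. \<not> iso S' B))"

lemma Id_learnable_closed_classes:
  assumes fam: "family \<sigma> K" and Id: "Id_learnable \<sigma> K"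
  shows "closed_classes \<sigma> K"
  unfolding closed_classes_def
proof (intro ballI impI)
  fix S B assume S: "S \<in> LD \<sigma> K" and B: "B \<in> K" and "\<not> iso S B"
  show "nearby \<sigma> K S (\<lambda>S'. \<not> iso S' B)"
  proof (rule ccontr)
    assume "\<not> nearby \<sigma> K S (\<lambda>S'. \<not> iso S' B)"
    then have "\<forall>j. \<exists>T. T \<in> LD \<sigma> K \<and> restr T j = restr S j \<and> iso T B"
      unfolding nearby_def by blast
    then obtain T where T: "\<forall>j. T j \<in> LD \<sigma> K \<and> restr (T j) j = restr S j \<and> iso (T j) B"
      by metis
    have "iso S B"
      using T S family_mem_LD[OF fam B]
      by (intro Id_learnable_iso_limit[OF Id, of T "\<lambda>_. B"]) auto
    then show False using \<open>\<not> iso S B\<close> by blast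
  qed
qed

lemma co_learnable_if_closed_classes:
  assumes fam: "family \<sigma> K" and closed: "closed_classes \<sigma> K"
  shows "co_learnable \<sigma> K"
proof -
  text \<open>At stage s the learner examines the member b s of K; it names b s once the data rule it
    out. Pairing with a second coordinate makes every member be examined at arbitrarily late stages.\<close>
  define b where "b s = from_nat_into K (fst (prod_decode s))" for s
  define M :: learner where "M s D =
      (if K \<noteq> {} \<and> (\<forall>S'\<in>LD \<sigma> K. restr S' s = D \<longrightarrow> \<not> iso S' (b s)) then Some (b s) else None)"
    for s D
  have "{B. \<exists>s. M s (restr S s) = Some B} = K - {A}"
    if S: "S \<in> LD \<sigma> K" and A: "A \<in> K" "iso S A" for S A
  proof (intro equalityI subsetI)
    fix B assume "B \<in> {B. \<exists>s. M s (restr S s) = Some B}"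
    then obtain s where "K \<noteq> {}" "B = b s" "\<not> iso S B"
      using S unfolding M_def by (auto split: if_splits)
    then show "B \<in> K - {A}"
      using A from_nat_into unfolding b_def by blast
  next
    fix B assume B: "B \<in> K - {A}"
    then have "\<not> iso S B" using family_iso_unique[OF fam, of A B S] A by blast
    then obtain s0 where s0: "\<forall>S'\<in>LD \<sigma> K. restr S' s0 = restr S s0 \<longrightarrow> \<not> iso S' B"
      using closed S B unfolding closed_classes_def nearby_def by blast
    define s where "s = prod_encode (to_nat_on K B, s0)"
    have "b s = B"
      using B fam unfolding b_def s_def family_def by simp
    moreover have "s0 \<le> s" unfolding s_def by (rule le_prod_encode_2)
    ultimately have "\<not> iso S' (b s)" if "S' \<in> LD \<sigma> K" "restr S' s = restr S s" for S'
      using s0 that restr_eq_mono[OF that(2)] by blast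
    then have "M s (restr S s) = Some B"
      using B \<open>b s = B\<close> unfolding M_def by auto
    then show "B \<in> {B. \<exists>s. M s (restr S s) = Some B}" by blast
  qed
  then show ?thesis unfolding co_learnable_def by blast
qed

lemma Id_learnable_imp_co_learnable: "family \<sigma> K \<Longrightarrow> Id_learnable \<sigma> K \<Longrightarrow> co_learnable \<sigma> K"
  by (intro co_learnable_if_closed_classes Id_learnable_closed_classes)

lemma mono_nat_pred_threshold:
  fixes P :: "nat \<Rightarrow> bool"
  assumes "mono P" "P m"
  shows "\<exists>s0. \<forall>t. P t \<longleftrightarrow> s0 \<le> t"
proof (intro exI allI iffI)
  fix t
  show "P t \<Longrightarrow> (LEAST t. P t) \<le> t" by (rule Least_le)
  assume "(LEAST t. P t) \<le> t"
  moreover have "P (LEAST t. P t)" using assms(2) by (rule LeastI)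
  ultimately show "P t" using assms(1) unfolding mono_def le_bool_def by blast
qed

lemma finite_range_exhausted:
  fixes f :: "nat \<Rightarrow> 'a option"
  assumes "finite {x. \<exists>s. f s = Some x}"
  shows "\<exists>s0. \<forall>t. {x. \<exists>s\<le>t. f s = Some x} = {x. \<exists>s. f s = Some x} \<longleftrightarrow> s0 \<le> t"
proof -
  let ?R = "{x. \<exists>s. f s = Some x}" and ?R_upto = "\<lambda>t. {x. \<exists>s\<le>t. f s = Some x}"
  have "\<forall>x\<in>?R. \<exists>s. f s = Some x" by blast
  then obtain c where c: "\<forall>x\<in>?R. f (c x) = Some x" by metis
  obtain m where "\<forall>x\<in>?R. c x \<le> m"
    using finite_nat_set_iff_bounded_le[of "c ` ?R"] assms by auto
  then have "?R_upto m = ?R" using c by blast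
  moreover have "mono (\<lambda>t. ?R_upto t = ?R)"
  proof (intro monoI le_boolI)
    fix t t' :: nat assume "t \<le> t'" "?R_upto t = ?R"
    then have "?R \<subseteq> ?R_upto t'" by (blast intro: le_trans)
    then show "?R_upto t' = ?R" by blast
  qed
  ultimately show ?thesis using mono_nat_pred_threshold by blast
qed

text \<open>For finite K the co-learner eventually has named all members but one; from then on the
  Fin-learner outputs the missing one.\<close>

lemma co_learnable_imp_Fin_learnable:
  assumes fam: "family \<sigma> K" and "finite K" and "co_learnable \<sigma> K"
  shows "Fin_learnable \<sigma> K"
proof -
  obtain M where M: "\<forall>S\<in>LD \<sigma> K. \<forall>A\<in>K. iso S A \<longrightarrow> {B. \<exists>s. M s (restr S s) = Some B} = K - {A}"
    using assms(3) unfolding co_learnable_def by blast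
  define seen where "seen t D = {B. \<exists>s\<le>t. M s (restr D s) = Some B}" for t D
  define N :: learner where "N t D =
      (if \<exists>A\<in>K. seen t D = K - {A} then Some (THE A. A \<in> K \<and> seen t D = K - {A}) else None)"
    for t D
  have "\<exists>s0. (\<forall>t<s0. N t (restr S t) = None) \<and> (\<exists>A\<in>K. iso S A \<and> (\<forall>t\<ge>s0. N t (restr S t) = Some A))"
    if "S \<in> LD \<sigma> K" for S
  proof -
    obtain A where A: "A \<in> K" "iso S A" using \<open>S \<in> LD \<sigma> K\<close> unfolding mem_LD_iff by blast
    have named: "{B. \<exists>s. M s (restr S s) = Some B} = K - {A}"
      using M \<open>S \<in> LD \<sigma> K\<close> A by blast
    have seen: "seen t (restr S t) = {B. \<exists>s\<le>t. M s (restr S s) = Some B}" for t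
      unfolding seen_def by (metis (no_types, lifting) restr_restr)
    have fin: "finite {B. \<exists>s. M s (restr S s) = Some B}" using named \<open>finite K\<close> by simp
    obtain s0 where
      "\<forall>t. {B. \<exists>s\<le>t. M s (restr S s) = Some B} = {B. \<exists>s. M s (restr S s) = Some B} \<longleftrightarrow> s0 \<le> t"
      using finite_range_exhausted[OF fin] by blast
    then have s0: "\<forall>t. seen t (restr S t) = K - {A} \<longleftrightarrow> s0 \<le> t" unfolding named seen .
    have "seen t (restr S t) \<subseteq> K - {A}" for t
      using named unfolding seen by blast
    then have missing: "A' \<in> K \<and> seen t (restr S t) = K - {A'} \<longleftrightarrow> A' = A \<and> seen t (restr S t) = K - {A}"
      for A' t
      using A(1) by blast
    have "N t (restr S t) = (if seen t (restr S t) = K - {A} then Some A else None)" for t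
      unfolding N_def Bex_def missing by (cases "seen t (restr S t) = K - {A}") simp_all
    then show ?thesis using s0 A by (intro exI[of _ s0]) auto
  qed
  then show ?thesis unfolding Fin_learnable_def by blast
qed

text \<open>The indicators of the clopen classes e k form the reduction to Id; the one remaining class A
  is the one on which all indicators vanish.\<close>

lemma Id_learnable_if_clopen_classes:
  fixes e :: "nat \<Rightarrow> struc"
  assumes K: "K \<subseteq> insert A (range e)"
    and clopen: "\<forall>k. locally_constant_LD \<sigma> K (\<lambda>S. iso S (e k))"
  shows "Id_learnable \<sigma> K"
proof -
  define \<Gamma> where "\<Gamma> S = (\<lambda>k. if iso S (e k) then 1 else 0 :: nat)" for S
  have "continuous_map (subtopology struc_top (LD \<sigma> K)) baire_top \<Gamma>"
    unfolding baire_top_def continuous_map_componentwise_UNIV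
  proof
    fix k
    have "locally_constant_LD \<sigma> K (\<lambda>S. \<Gamma> S k)"
      using clopen unfolding locally_constant_LD_def nearby_def \<Gamma>_def by metis
    then show "continuous_map (subtopology struc_top (LD \<sigma> K)) (discrete_topology UNIV) (\<lambda>S. \<Gamma> S k)"
      by (rule continuous_map_locally_constant_LD) simp
  qed
  moreover have "\<Gamma> S = \<Gamma> S' \<longleftrightarrow> iso S S'" if "S \<in> LD \<sigma> K" "S' \<in> LD \<sigma> K" for S S'
  proof
    assume "iso S S'"
    then show "\<Gamma> S = \<Gamma> S'" unfolding \<Gamma>_def by (metis iso_sym iso_trans)
  next
    assume "\<Gamma> S = \<Gamma> S'"
    then have same: "iso S (e k) \<longleftrightarrow> iso S' (e k)" for k
      unfolding \<Gamma>_def by (metis one_neq_zero)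
    show "iso S S'"
    proof (cases "\<exists>k. iso S (e k)")
      case True
      then show ?thesis using same by (metis iso_sym iso_trans)
    next
      case False
      then have "iso S A" "iso S' A"
        using that K same unfolding mem_LD_iff by blast+
      then show ?thesis by (metis iso_sym iso_trans)
    qed
  qed
  ultimately show ?thesis unfolding Id_learnable_def by blast
qed


section \<open>Existential patterns\<close>

text \<open>A pattern is a finite set of atoms (relation symbol, tuple of variables); S realizes it if some
  assignment of the variables makes all atoms true in S.\<close>

definition holds_at :: "struc \<Rightarrow> (nat \<Rightarrow> nat) \<Rightarrow> (nat \<times> nat list) set \<Rightarrow> bool" where
  "holds_at S h pat \<longleftrightarrow> (\<forall>(i, xs)\<in>pat. S i (map h xs))"

definition realizes :: "struc \<Rightarrow> (nat \<times> nat list) set \<Rightarrow> bool" where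
  "realizes S pat \<longleftrightarrow> (\<exists>h. holds_at S h pat)"

lemma realizes_iso:
  assumes "iso S S'" "realizes S pat"
  shows "realizes S' pat"
proof -
  obtain f where f: "\<forall>i xs. S i xs \<longleftrightarrow> S' i (map f xs)" using assms(1) unfolding iso_def by blast
  obtain h where "holds_at S h pat" using assms(2) unfolding realizes_def by blast
  then have "holds_at S' (f \<circ> h) pat" using f unfolding holds_at_def by auto
  then show ?thesis unfolding realizes_def by blast
qed

lemma realizes_nearby:
  assumes "finite pat" "realizes S pat"
  shows "nearby \<sigma> K S (\<lambda>S'. realizes S' pat)"
proof -
  obtain h where h: "holds_at S h pat" using assms(2) unfolding realizes_def by blast
  have "finite (\<Union>p\<in>pat. set (map h (snd p)))" using assms(1) by simp
  then obtain m where m: "\<forall>p\<in>pat. \<forall>x\<in>set (map h (snd p)). x \<le> m"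
    unfolding finite_nat_set_iff_bounded_le by blast
  have "holds_at S' h pat" if "restr S' m = restr S m" for S'
    unfolding holds_at_def
  proof
    fix p assume "p \<in> pat"
    then show "case p of (i, xs) \<Rightarrow> S' i (map h xs)"
      using h m restr_eqD[OF that] unfolding holds_at_def by (cases p) auto
  qed
  then show ?thesis unfolding nearby_def realizes_def by blast
qed

lemma not_iso_nearby:
  assumes "iso S X" "finite pat" "realizes X pat" "\<not> realizes B pat"
  shows "nearby \<sigma> K S (\<lambda>S'. \<not> iso S' B)"
proof -
  have "realizes S pat" using realizes_iso[OF iso_sym[OF assms(1)] assms(3)] .
  then obtain s where "\<forall>S'\<in>LD \<sigma> K. restr S' s = restr S s \<longrightarrow> realizes S' pat"
    using realizes_nearby[OF assms(2)] unfolding nearby_def by blast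
  then show ?thesis
    using assms(4) realizes_iso unfolding nearby_def by blast
qed


section \<open>The separating examples\<close>

text \<open>fin_chain n is the successor path 1 \<rightarrow> \<dots> \<rightarrow> n+1 with its endpoints marked by the unary
  relations 0 and 1, together with a point 0 marked by relation 3 and a point n+2 marked by
  relation 4. Letting n grow, the path becomes the ray ray3 and the point n+2 disappears; in the
  isomorphic copy with 0 and n+2 exchanged, the marked point 0 carries relation 4 instead, giving
  ray4 in the limit.\<close>

definition chain_sig :: sig where
  "chain_sig = [1, 1, 2, 1, 1]"

definition fin_chain :: "nat \<Rightarrow> struc" where
  "fin_chain n = (\<lambda>i xs. (i = 0 \<and> xs = [1]) \<or> (i = 1 \<and> xs = [Suc n])
     \<or> (i = 2 \<and> (\<exists>x. 1 \<le> x \<and> x \<le> n \<and> xs = [x, Suc x]))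
     \<or> (i = 3 \<and> xs = [0]) \<or> (i = 4 \<and> xs = [n + 2]))"

definition fin_chain_swapped :: "nat \<Rightarrow> struc" where
  "fin_chain_swapped n = (\<lambda>i xs. fin_chain n i (map (Transposition.transpose 0 (n + 2)) xs))"

definition ray3 :: struc where
  "ray3 = (\<lambda>i xs. (i = 0 \<and> xs = [1]) \<or> (i = 2 \<and> (\<exists>x. 1 \<le> x \<and> xs = [x, Suc x])) \<or> (i = 3 \<and> xs = [0]))"

definition ray4 :: struc where
  "ray4 = (\<lambda>i xs. (i = 0 \<and> xs = [1]) \<or> (i = 2 \<and> (\<exists>x. 1 \<le> x \<and> xs = [x, Suc x])) \<or> (i = 4 \<and> xs = [0]))"

definition K_Id :: "struc set" where
  "K_Id = insert ray3 (range fin_chain)"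

definition K_co :: "struc set" where
  "K_co = insert ray4 K_Id"

lemma fin_chain_swapped_eq:
  "fin_chain_swapped n = (\<lambda>i xs. (i = 0 \<and> xs = [1]) \<or> (i = 1 \<and> xs = [Suc n])
     \<or> (i = 2 \<and> (\<exists>x. 1 \<le> x \<and> x \<le> n \<and> xs = [x, Suc x]))
     \<or> (i = 3 \<and> xs = [n + 2]) \<or> (i = 4 \<and> xs = [0]))"
proof (intro ext)
  fix i xs
  let ?\<tau> = "Transposition.transpose 0 (n + 2)"
  have \<tau>: "?\<tau> x = x" if "1 \<le> x" "x \<le> Suc n" for x
    using that by (simp add: Transposition.transpose_def)
  have "map ?\<tau> xs = ys \<longleftrightarrow> xs = map ?\<tau> ys" for ys by auto
  then show "fin_chain_swapped n i xs = ((i = 0 \<and> xs = [1]) \<or> (i = 1 \<and> xs = [Suc n])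
     \<or> (i = 2 \<and> (\<exists>x. 1 \<le> x \<and> x \<le> n \<and> xs = [x, Suc x]))
     \<or> (i = 3 \<and> xs = [n + 2]) \<or> (i = 4 \<and> xs = [0]))"
    unfolding fin_chain_swapped_def fin_chain_def by (simp add: \<tau> cong: conj_cong)
qed

lemma iso_fin_chain_swapped: "iso (fin_chain_swapped n) (fin_chain n)"
  unfolding iso_def fin_chain_swapped_def by (blast intro: bij_transpose)

lemma is_struc_chain_sig:
  "is_struc chain_sig (fin_chain n)" "is_struc chain_sig (fin_chain_swapped n)"
  "is_struc chain_sig ray3" "is_struc chain_sig ray4"
  unfolding is_struc_def chain_sig_def fin_chain_def fin_chain_swapped_eq ray3_def ray4_def
  by auto

lemma restr_fin_chain: "s \<le> n \<Longrightarrow> restr (fin_chain n) s = restr ray3 s"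
  unfolding restr_def fin_chain_def ray3_def by (intro ext) auto

lemma restr_fin_chain_swapped: "s \<le> n \<Longrightarrow> restr (fin_chain_swapped n) s = restr ray4 s"
  unfolding restr_def fin_chain_swapped_eq ray4_def by (intro ext) auto

definition path_pat :: "nat \<Rightarrow> (nat \<times> nat list) set" where
  "path_pat k = {(0, [0])} \<union> (\<lambda>j. (2, [j, Suc j])) ` {..<k}"

definition end_path_pat :: "nat \<Rightarrow> (nat \<times> nat list) set" where
  "end_path_pat k = insert (1, [k]) (path_pat k)"

definition atom_pat :: "nat \<Rightarrow> (nat \<times> nat list) set" where
  "atom_pat i = {(i, [0])}"

lemma finite_pats: "finite (path_pat k)" "finite (end_path_pat k)" "finite (atom_pat i)"
  unfolding path_pat_def end_path_pat_def atom_pat_def by auto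

lemma holds_at_path_pat:
  "holds_at S h (path_pat k) \<longleftrightarrow> S 0 [h 0] \<and> (\<forall>j<k. S 2 [h j, h (Suc j)])"
  unfolding holds_at_def path_pat_def by auto

lemma holds_at_end_path_pat:
  "holds_at S h (end_path_pat k) \<longleftrightarrow> S 1 [h k] \<and> holds_at S h (path_pat k)"
  unfolding holds_at_def end_path_pat_def by auto

lemma fin_chain_path:
  assumes "holds_at (fin_chain n) h (path_pat k)"
  shows "k \<le> n \<and> h k = Suc k"
  using assms
proof (induction k)
  case 0
  then show ?case unfolding holds_at_path_pat fin_chain_def by auto
next
  case (Suc k)
  then have "holds_at (fin_chain n) h (path_pat k)" "fin_chain n 2 [h k, h (Suc k)]"
    unfolding holds_at_path_pat by auto
  then show ?case using Suc.IH unfolding fin_chain_def by auto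
qed

lemma holds_at_atom_pat: "holds_at S h (atom_pat i) \<longleftrightarrow> S i [h 0]"
  unfolding holds_at_def atom_pat_def by simp

lemma realizes_examples:
  "realizes (fin_chain n) (end_path_pat n)"
  "realizes ray3 (path_pat k)" "realizes ray4 (path_pat k)"
  "realizes ray3 (atom_pat 3)" "realizes ray4 (atom_pat 4)"
proof -
  show "realizes (fin_chain n) (end_path_pat n)"
    unfolding realizes_def holds_at_end_path_pat holds_at_path_pat fin_chain_def
    by (rule exI[of _ Suc]) simp
  show "realizes ray3 (path_pat k)" "realizes ray4 (path_pat k)"
    unfolding realizes_def holds_at_path_pat ray3_def ray4_def by (rule exI[of _ Suc], simp)+
  show "realizes ray3 (atom_pat 3)" "realizes ray4 (atom_pat 4)"
    unfolding realizes_def holds_at_atom_pat ray3_def ray4_def by (rule exI[of _ "\<lambda>_. 0"], simp)+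
qed

lemma not_realizes_examples:
  "\<not> realizes ray3 (end_path_pat k)" "\<not> realizes ray4 (end_path_pat k)"
  "\<not> realizes (fin_chain n) (path_pat (Suc n))"
  "\<not> realizes ray4 (atom_pat 3)" "\<not> realizes ray3 (atom_pat 4)"
  unfolding realizes_def holds_at_end_path_pat holds_at_atom_pat
  by (simp_all add: ray3_def ray4_def) (use fin_chain_path in fastforce)

lemma mem_K_co: "X \<in> K_co \<longleftrightarrow> X = ray4 \<or> X = ray3 \<or> (\<exists>n. X = fin_chain n)"
  unfolding K_co_def K_Id_def by auto

lemma realizes_end_path_pat_K_co:
  assumes "X \<in> K_co" "realizes X (end_path_pat k)"
  shows "X = fin_chain k"
proof -
  obtain n where "X = fin_chain n"
    using assms not_realizes_examples unfolding mem_K_co by blast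
  moreover obtain h where "holds_at (fin_chain n) h (end_path_pat k)"
    using assms(2) \<open>X = fin_chain n\<close> unfolding realizes_def by blast
  ultimately show ?thesis
    using fin_chain_path[of n h k] unfolding holds_at_end_path_pat fin_chain_def by auto
qed

lemma distinguishing_pattern:
  assumes "X \<in> K_co" "B \<in> K_co" "X \<noteq> B"
  shows "\<exists>pat. finite pat \<and> realizes X pat \<and> \<not> realizes B pat"
proof -
  have rays: "\<exists>pat. finite pat \<and> realizes R pat \<and> \<not> realizes (fin_chain m) pat"
    if "R = ray3 \<or> R = ray4" for R m
    using that finite_pats realizes_examples not_realizes_examples
    by (intro exI[of _ "path_pat (Suc m)"]) auto
  consider (chain) n where "X = fin_chain n" | (ray3) "X = ray3" | (ray4) "X = ray4"
    using assms(1) unfolding mem_K_co by blast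
  then show ?thesis
  proof cases
    case chain
    then have "\<not> realizes B (end_path_pat n)"
      using realizes_end_path_pat_K_co[OF assms(2)] assms(3) by blast
    then show ?thesis
      using chain finite_pats realizes_examples by (intro exI[of _ "end_path_pat n"]) simp
  next
    case ray3
    then have "B = ray4 \<or> (\<exists>m. B = fin_chain m)" using assms(2,3) unfolding mem_K_co by blast
    then show ?thesis
      using ray3 rays finite_pats realizes_examples not_realizes_examples
      by (elim disjE exE) (intro exI[of _ "atom_pat 3"], simp, blast)
  next
    case ray4
    then have "B = ray3 \<or> (\<exists>m. B = fin_chain m)" using assms(2,3) unfolding mem_K_co by blast
    then show ?thesis
      using ray4 rays finite_pats realizes_examples not_realizes_examples
      by (elim disjE exE) (intro exI[of _ "atom_pat 4"], simp, blast)
  qed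
qed

lemma iso_K_co_eq:
  assumes "X \<in> K_co" "B \<in> K_co" "iso X B"
  shows "X = B"
proof (rule ccontr)
  assume "X \<noteq> B"
  then obtain pat where "realizes X pat" "\<not> realizes B pat"
    using distinguishing_pattern assms(1,2) by blast
  then show False using realizes_iso[OF assms(3)] by blast
qed

lemma family_subset_K_co: "K \<subseteq> K_co \<Longrightarrow> family chain_sig K"
  unfolding family_def
proof (intro conjI ballI impI)
  assume K: "K \<subseteq> K_co"
  have "countable K_co" unfolding K_co_def K_Id_def by simp
  then show "countable K" using K countable_subset by blast
  show "is_struc chain_sig A" if "A \<in> K" for A
  proof -
    have "A \<in> K_co" using that K by blast
    then show ?thesis using is_struc_chain_sig unfolding mem_K_co by blast
  qed
  show "A = B" if "A \<in> K" "B \<in> K" "iso A B" for A B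
    using that K iso_K_co_eq by blast
qed

lemma closed_classes_subset_K_co:
  assumes "K \<subseteq> K_co"
  shows "closed_classes \<sigma> K"
  unfolding closed_classes_def
proof (intro ballI impI)
  fix S B assume "S \<in> LD \<sigma> K" "B \<in> K" "\<not> iso S B"
  then obtain X where X: "X \<in> K" "iso S X" unfolding mem_LD_iff by blast
  then have "X \<noteq> B" using \<open>\<not> iso S B\<close> by blast
  moreover have "X \<in> K_co" "B \<in> K_co" using X(1) \<open>B \<in> K\<close> assms by blast+
  ultimately obtain pat where "finite pat" "realizes X pat" "\<not> realizes B pat"
    using distinguishing_pattern by blast
  then show "nearby \<sigma> K S (\<lambda>S'. \<not> iso S' B)" using not_iso_nearby[OF X(2)] by blast
qed

text \<open>The class of fin_chain k is also open: it is detected by the finite pattern end_path_pat k.\<close>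

lemma locally_constant_iso_fin_chain:
  assumes "K \<subseteq> K_co"
  shows "locally_constant_LD \<sigma> K (\<lambda>S. iso S (fin_chain k))"
  unfolding locally_constant_LD_def
proof
  fix S assume S: "S \<in> LD \<sigma> K"
  show "nearby \<sigma> K S (\<lambda>S'. iso S' (fin_chain k) = iso S (fin_chain k))"
  proof (cases "iso S (fin_chain k)")
    case True
    then have "nearby \<sigma> K S (\<lambda>S'. realizes S' (end_path_pat k))"
      using realizes_nearby finite_pats realizes_examples iso_sym realizes_iso by metis
    moreover have "iso S' (fin_chain k)" if "S' \<in> LD \<sigma> K" "realizes S' (end_path_pat k)" for S'
      using that assms realizes_iso realizes_end_path_pat_K_co unfolding mem_LD_iff
      by (metis subsetD)
    ultimately show ?thesis using True unfolding nearby_def by blast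
  next
    case False
    have "fin_chain k \<in> K_co" unfolding mem_K_co by blast
    then obtain X where "X \<in> K_co" "iso S X" "X \<noteq> fin_chain k"
      using S False assms unfolding mem_LD_iff by blast
    then have "nearby \<sigma> K S (\<lambda>S'. \<not> iso S' (fin_chain k))"
      using distinguishing_pattern not_iso_nearby \<open>fin_chain k \<in> K_co\<close> by metis
    then show ?thesis using False unfolding nearby_def by blast
  qed
qed

lemma K_Id_subset_K_co: "K_Id \<subseteq> K_co"
  unfolding K_co_def by blast

lemma Id_learnable_K_Id: "Id_learnable chain_sig K_Id"
  using K_Id_subset_K_co locally_constant_iso_fin_chain
  by (intro Id_learnable_if_clopen_classes[of _ ray3 fin_chain]) (auto simp: K_Id_def)

text \<open>A Fin learner would have to commit on some finite part of ray3, which is also an initial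
  part of a finite chain.\<close>

lemma not_Fin_learnable_K_Id: "\<not> Fin_learnable chain_sig K_Id"
proof
  have fam: "family chain_sig K_Id" by (rule family_subset_K_co[OF K_Id_subset_K_co])
  have mem: "ray3 \<in> K_Id" "fin_chain n \<in> K_Id" for n unfolding K_Id_def by auto
  assume "Fin_learnable chain_sig K_Id"
  then obtain s where s: "\<forall>S'\<in>LD chain_sig K_Id. restr S' s = restr ray3 s \<longrightarrow> cls K_Id S' = cls K_Id ray3"
    using Fin_learnable_locally_constant_cls[OF fam] family_mem_LD[OF fam mem(1)]
    unfolding locally_constant_LD_def nearby_def by blast
  moreover have "fin_chain s \<in> LD chain_sig K_Id" "restr (fin_chain s) s = restr ray3 s"
    using family_mem_LD[OF fam mem(2)] restr_fin_chain by simp_all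
  ultimately have "cls K_Id (fin_chain s) = cls K_Id ray3" by blast
  then have "fin_chain s = ray3" using cls_eqI[OF fam mem(1) iso_refl] cls_eqI[OF fam mem(2) iso_refl] by simp
  moreover have "fin_chain s 1 [Suc s]" "\<not> ray3 1 [Suc s]" unfolding fin_chain_def ray3_def by simp_all
  ultimately show False by simp
qed

lemma co_learnable_K_co: "co_learnable chain_sig K_co"
  by (intro co_learnable_if_closed_classes family_subset_K_co closed_classes_subset_K_co) simp_all

text \<open>fin_chain n and its swapped copy are isomorphic but converge to the non-isomorphic rays.\<close>

lemma not_Id_learnable_K_co: "\<not> Id_learnable chain_sig K_co"
proof
  assume Id: "Id_learnable chain_sig K_co"
  have fam: "family chain_sig K_co" by (rule family_subset_K_co) simp
  have mem: "ray3 \<in> K_co" "ray4 \<in> K_co" "fin_chain n \<in> K_co" for n unfolding mem_K_co by auto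
  have "fin_chain_swapped n \<in> LD chain_sig K_co" for n
    using is_struc_chain_sig iso_fin_chain_swapped mem unfolding mem_LD_iff by blast
  then have "iso ray3 ray4"
    using family_mem_LD[OF fam] mem iso_sym[OF iso_fin_chain_swapped]
      restr_fin_chain restr_fin_chain_swapped
    by (intro Id_learnable_iso_limit[OF Id, of fin_chain fin_chain_swapped]) auto
  then have "ray3 = ray4" by (rule iso_K_co_eq[OF mem(1,2)])
  moreover have "ray3 3 [0]" "\<not> ray4 3 [0]" unfolding ray3_def ray4_def by simp_all
  ultimately show False by simp
qed


theorem mainTheorem5:
  shows "(\<forall>\<sigma> K. family \<sigma> K \<and> Fin_learnable \<sigma> K \<longrightarrow> Id_learnable \<sigma> K)
       \<and> (\<forall>\<sigma> K. family \<sigma> K \<and> Id_learnable \<sigma> K \<longrightarrow> co_learnable \<sigma> K)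
       \<and> (\<exists>\<sigma> K. family \<sigma> K \<and> Id_learnable \<sigma> K \<and> \<not> Fin_learnable \<sigma> K)
       \<and> (\<exists>\<sigma> K. family \<sigma> K \<and> co_learnable \<sigma> K \<and> \<not> Id_learnable \<sigma> K)
       \<and> (\<forall>\<sigma> K. family \<sigma> K \<and> finite K \<longrightarrow>
             (Fin_learnable \<sigma> K \<longleftrightarrow> Id_learnable \<sigma> K) \<and> (Id_learnable \<sigma> K \<longleftrightarrow> co_learnable \<sigma> K))"
proof (intro conjI allI impI)
  show "\<exists>\<sigma> K. family \<sigma> K \<and> Id_learnable \<sigma> K \<and> \<not> Fin_learnable \<sigma> K"
    using family_subset_K_co[OF K_Id_subset_K_co] Id_learnable_K_Id not_Fin_learnable_K_Id by blast
  show "\<exists>\<sigma> K. family \<sigma> K \<and> co_learnable \<sigma> K \<and> \<not> Id_learnable \<sigma> K"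
    using family_subset_K_co co_learnable_K_co not_Id_learnable_K_co by blast
  fix \<sigma> K
  show "family \<sigma> K \<and> Fin_learnable \<sigma> K \<Longrightarrow> Id_learnable \<sigma> K"
    using Fin_learnable_imp_Id_learnable by blast
  show "family \<sigma> K \<and> Id_learnable \<sigma> K \<Longrightarrow> co_learnable \<sigma> K"
    using Id_learnable_imp_co_learnable by blast
  assume "family \<sigma> K \<and> finite K"
  then show "Fin_learnable \<sigma> K \<longleftrightarrow> Id_learnable \<sigma> K" "Id_learnable \<sigma> K \<longleftrightarrow> co_learnable \<sigma> K"
    using Fin_learnable_imp_Id_learnable Id_learnable_imp_co_learnable
      co_learnable_imp_Fin_learnable by blast+
qed

end
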